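(* Let $n\ge1$, $p$ a prime, $R,S\subset E_n$, and let $\mathcal{C}=\{x\in\mathbb{Z}^n:F^{(i)}_{T^{(i)}}(x)\le0\ \forall i\in S\}$ be the $S$-adapted $p$-cone attached to a family $(T^{(i)})_{i\in S}$. Then $\mathcal{C}_{\mathsf{pHa},S}\subset\mathcal{C}$ if and only if $\mathcal{C}$ is Hasse-admissible and positive.
   Context: $E_n=\{1,\dots,n\}$, indices mod $n$; $e_i$ standard basis ($e_0=e_n$). $\delta_U^{(i)}=-1$ if $i\in U$, else $1$. $F^{(d)}_T(x)=\sum_{i=0}^{n-1}p^i\delta_T^{(d+i)}x_{d+i}$. Saturation of a submonoid $A\subset\mathbb{Z}^n$: $\{x:mx\in A\text{ for some }m\ge1\}$. $\mathsf{ha}^{(i)}_{R,S}=-\delta_S^{(i)}e_i-p\delta_R^{(i-1)}e_{i-1}$; $\mathcal{C}_{\mathsf{pHa},S}$ is the saturation of $\sum_{i\in S}\mathbb{N}\mathsf{ha}^{(i)}_{R,S}+\sum_{i\notin S}\mathbb{Z}\mathsf{ha}^{(i)}_{R,S}$. $T$ is $(R,S)$-admissible if for each $i$ with $i+1\notin S$: if $i\notin R$ exactly one of $i,i+1$ lies in $T$, if $i\in R$ both or neither lie in $T$. $T$ is $j$-positive if ($j-1\in T\iff j-1\in R$). $T$ is Hasse-admissible if it is $(R,S)$-admissible and $j$-positive for every $j\in S\setminus T$. $\mathcal{C}$ is Hasse-admissible if every $T^{(i)}$ is, and positive if every $T^{(i)}$ is $i$-positive. *)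

theory Defs
  imports "HOL-Computational_Algebra.Primes"
begin

text \<open>Indices live in E_n = {1..n}; an arbitrary integer index k is read mod n
  and normalised to the representative in {1..n} (so index 0 means n).\<close>
definition nidx :: "nat \<Rightarrow> int \<Rightarrow> nat" where
  "nidx n k = nat ((k - 1) mod int n + 1)"

definition Zn :: "nat \<Rightarrow> (nat \<Rightarrow> int) set" where
  "Zn n = {x. \<forall>i. i \<notin> {1..n} \<longrightarrow> x i = 0}"

definition delta :: "nat \<Rightarrow> nat set \<Rightarrow> int \<Rightarrow> int" where
  "delta n U k = (if nidx n k \<in> U then -1 else 1)"

definition ebas :: "nat \<Rightarrow> int \<Rightarrow> nat \<Rightarrow> int" where
  "ebas n k = (\<lambda>j. if j = nidx n k then 1 else 0)"

definition Fp :: "nat \<Rightarrow> nat \<Rightarrow> nat set \<Rightarrow> int \<Rightarrow> (nat \<Rightarrow> int) \<Rightarrow> int" where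
  "Fp n p T d x = (\<Sum>i<n. int p ^ i * delta n T (d + int i) * x (nidx n (d + int i)))"

definition ha :: "nat \<Rightarrow> nat \<Rightarrow> nat set \<Rightarrow> nat set \<Rightarrow> int \<Rightarrow> nat \<Rightarrow> int" where
  "ha n p R S i = (\<lambda>j. - delta n S i * ebas n i j - int p * delta n R (i - 1) * ebas n (i - 1) j)"

definition haMonoid :: "nat \<Rightarrow> nat \<Rightarrow> nat set \<Rightarrow> nat set \<Rightarrow> (nat \<Rightarrow> int) set" where
  "haMonoid n p R S = {(\<lambda>j. \<Sum>i\<in>{1..n}. a i * ha n p R S (int i) j) | a.
       \<forall>i\<in>S. a i \<ge> 0}"

definition saturation :: "nat \<Rightarrow> (nat \<Rightarrow> int) set \<Rightarrow> (nat \<Rightarrow> int) set" where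
  "saturation n A = {x \<in> Zn n. \<exists>m::nat. m \<ge> 1 \<and> (\<lambda>j. int m * x j) \<in> A}"

definition CpHa :: "nat \<Rightarrow> nat \<Rightarrow> nat set \<Rightarrow> nat set \<Rightarrow> (nat \<Rightarrow> int) set" where
  "CpHa n p R S = saturation n (haMonoid n p R S)"

definition pcone :: "nat \<Rightarrow> nat \<Rightarrow> nat set \<Rightarrow> (nat \<Rightarrow> nat set) \<Rightarrow> (nat \<Rightarrow> int) set" where
  "pcone n p S T = {x \<in> Zn n. \<forall>i\<in>S. Fp n p (T i) (int i) x \<le> 0}"

definition RS_admissible :: "nat \<Rightarrow> nat set \<Rightarrow> nat set \<Rightarrow> nat set \<Rightarrow> bool" where
  "RS_admissible n R S T = (\<forall>i\<in>{1..n}. nidx n (int i + 1) \<notin> S \<longrightarrow>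
     (if i \<notin> R then ((i \<in> T) \<noteq> (nidx n (int i + 1) \<in> T))
      else ((i \<in> T) = (nidx n (int i + 1) \<in> T))))"

definition j_positive :: "nat \<Rightarrow> nat set \<Rightarrow> nat \<Rightarrow> nat set \<Rightarrow> bool" where
  "j_positive n R j T = ((nidx n (int j - 1) \<in> T) = (nidx n (int j - 1) \<in> R))"

definition hasse_admissible :: "nat \<Rightarrow> nat set \<Rightarrow> nat set \<Rightarrow> nat set \<Rightarrow> bool" where
  "hasse_admissible n R S T = (RS_admissible n R S T \<and> (\<forall>j\<in>S - T. j_positive n R j T))"

definition family_hasse_admissible :: "nat \<Rightarrow> nat set \<Rightarrow> nat set \<Rightarrow> (nat \<Rightarrow> nat set) \<Rightarrow> bool" where
  "family_hasse_admissible n R S T = (\<forall>i\<in>S. hasse_admissible n R S (T i))"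

definition family_positive :: "nat \<Rightarrow> nat set \<Rightarrow> nat set \<Rightarrow> (nat \<Rightarrow> nat set) \<Rightarrow> bool" where
  "family_positive n R S T = (\<forall>i\<in>S. j_positive n R i (T i))"

end

theory Submission
  imports Defs
begin

(* F^(d)_T is linear, so the saturated monoid C_pHa,S lies in the half-space F^(d)_T <= 0 iff
   F^(d)_T is <= 0 on the generators ha^(k) with k in S and vanishes on those with k not in S,
   which enter with both signs. With the signs s = delta_T(k) delta_S(k) and
   t = delta_T(k-1) delta_R(k-1) one computes F^(d)_T(ha^(k)) = -p^a (s + t), a > 0, for k <> d
   and F^(d)_T(ha^(d)) = -s - p^n t. Hence vanishing for k not in S is (R,S)-admissibility at
   k - 1, nonpositivity for k in S - {d} says that T is k-positive unless k is in T, and for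
   k = d, where p^n >= 2 outweighs s, it says that T is d-positive. *)

lemma nidx_eq_iff:
  assumes "n \<ge> 1"
  shows "nidx n a = nidx n b \<longleftrightarrow> a mod int n = b mod int n"
proof -
  have "0 \<le> (a - 1) mod int n" "0 \<le> (b - 1) mod int n" using assms by simp_all
  then have "nidx n a = nidx n b \<longleftrightarrow> (a - 1) mod int n = (b - 1) mod int n"
    unfolding nidx_def by (simp add: eq_nat_nat_iff)
  also have "\<dots> \<longleftrightarrow> a mod int n = b mod int n"
    by (simp add: mod_eq_dvd_iff)
  finally show ?thesis .
qed

lemma nidx_in_range:
  assumes "n \<ge> 1"
  shows "nidx n a \<in> {1..n}"
proof -
  have "0 \<le> (a - 1) mod int n" "(a - 1) mod int n < int n" using assms by simp_all
  then show ?thesis unfolding nidx_def by auto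
qed

lemma nidx_of_index: "i \<in> {1..n} \<Longrightarrow> nidx n (int i) = i"
  unfolding nidx_def by (simp add: mod_pos_pos_trivial)

lemma nidx_nidx_add:
  assumes "n \<ge> 1"
  shows "nidx n (int (nidx n a) + c) = nidx n (a + c)"
proof -
  have "int (nidx n a) = (a - 1) mod int n + 1"
    unfolding nidx_def using assms by simp
  then have "(int (nidx n a) + c) mod int n = (a + c) mod int n"
    using mod_add_left_eq[of "a - 1" "int n" "1 + c"] by (simp add: add.assoc)
  then show ?thesis using nidx_eq_iff[OF assms] by blast
qed

lemma delta_of_index: "i \<in> {1..n} \<Longrightarrow> delta n U (int i) = (if i \<in> U then -1 else 1)"
  unfolding delta_def by (simp add: nidx_of_index)

lemma mod_pred_plus_one:
  fixes x m :: int
  assumes "0 < m"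
  shows "(x - 1) mod m + 1 = (if x mod m = 0 then m else x mod m)"
proof -
  have "(x - 1) mod m = (x mod m - 1) mod m" by (simp add: mod_diff_left_eq)
  moreover have "0 \<le> x mod m" "x mod m < m" using assms by simp_all
  ultimately show ?thesis
    using zmod_minus1[OF assms] by (auto simp: mod_pos_pos_trivial)
qed

lemma Fp_lincomb: "Fp n p T d (\<lambda>j. \<Sum>i\<in>A. a i * h i j) = (\<Sum>i\<in>A. a i * Fp n p T d (h i))"
  unfolding Fp_def sum_distrib_left by (subst sum.swap) (simp add: mult_ac)

lemma Fp_lincomb2: "Fp n p T d (\<lambda>j. a * x j + b * y j) = a * Fp n p T d x + b * Fp n p T d y"
  unfolding Fp_def by (simp add: algebra_simps sum.distrib sum_distrib_left)

lemma Fp_scale: "Fp n p T d (\<lambda>j. c * x j) = c * Fp n p T d x"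
  unfolding Fp_def by (simp add: sum_distrib_left mult_ac)

lemma Fp_ebas:
  assumes n: "n \<ge> 1"
  shows "Fp n p T d (ebas n c) = int p ^ nat ((c - d) mod int n) * delta n T c"
proof -
  define r where "r = nat ((c - d) mod int n)"
  have "0 \<le> (c - d) mod int n" "(c - d) mod int n < int n" using n by simp_all
  then have r: "r < n" "int r = (c - d) mod int n" unfolding r_def by auto
  have hit: "nidx n (d + int i) = nidx n c \<longleftrightarrow> i = r" if "i < n" for i
  proof -
    have "nidx n (d + int i) = nidx n c \<longleftrightarrow> int i mod int n = (c - d) mod int n"
      by (simp add: nidx_eq_iff[OF n] mod_eq_dvd_iff algebra_simps)
    then show ?thesis using that by (simp add: r(2)[symmetric])
  qed
  have "Fp n p T d (ebas n c) = (\<Sum>i<n. if i = r then int p ^ i * delta n T (d + int i) else 0)"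
    unfolding Fp_def ebas_def by (intro sum.cong) (auto simp: hit)
  also have "\<dots> = int p ^ r * delta n T (d + int r)"
    using r by simp
  also have "delta n T (d + int r) = delta n T c"
    using hit[OF \<open>r < n\<close>] unfolding delta_def by simp
  finally show ?thesis unfolding r_def .
qed

lemma Fp_ha:
  assumes "n \<ge> 1"
  shows "Fp n p T d (ha n p R S k) =
    - (int p ^ nat ((k - d) mod int n)) * delta n T k * delta n S k
    - (int p ^ Suc (nat ((k - 1 - d) mod int n)) * delta n T (k - 1) * delta n R (k - 1))"
proof -
  have ha_eq: "ha n p R S k =
      (\<lambda>j. - delta n S k * ebas n k j + - (int p * delta n R (k - 1)) * ebas n (k - 1) j)"
    unfolding ha_def by simp
  show ?thesis
    unfolding ha_eq Fp_lincomb2 Fp_ebas[OF assms] by (simp add: algebra_simps)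
qed

lemma Fp_ha_same:
  assumes n: "n \<ge> 1"
  shows "Fp n p T d (ha n p R S d) =
    - delta n T d * delta n S d - int p ^ n * delta n T (d - 1) * delta n R (d - 1)"
proof -
  have "Suc (nat ((d - 1 - d) mod int n)) = n"
    using n by (simp add: zmod_minus1 nat_diff_distrib)
  then show ?thesis by (simp add: Fp_ha[OF n])
qed

lemma Fp_ha_other:
  assumes n: "n \<ge> 1" and d: "d \<in> {1..n}" and k: "k \<in> {1..n}" and "k \<noteq> d"
  shows "Fp n p T (int d) (ha n p R S (int k)) =
    - (int p ^ nat ((int k - int d) mod int n)) *
      (delta n T (int k) * delta n S (int k) + delta n T (int k - 1) * delta n R (int k - 1))"
proof -
  have "(int k - int d) mod int n \<noteq> 0"
    using \<open>k \<noteq> d\<close> nidx_eq_iff[OF n, of "int k" "int d"]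
    by (simp add: nidx_of_index[OF k] nidx_of_index[OF d] mod_eq_dvd_iff dvd_eq_mod_eq_0)
  then have "(int k - int d - 1) mod int n + 1 = (int k - int d) mod int n"
    using mod_pred_plus_one[of "int n" "int k - int d"] n by simp
  moreover have "0 \<le> (int k - int d - 1) mod int n" using n by simp
  ultimately have "Suc (nat ((int k - 1 - int d) mod int n)) = nat ((int k - int d) mod int n)"
    by (simp add: algebra_simps Suc_nat_eq_nat_zadd1)
  then show ?thesis by (simp add: Fp_ha[OF n] algebra_simps)
qed

lemma Fp_ha_same_nonpos_iff:
  assumes n: "n \<ge> 1" and p: "p \<ge> 2" and d: "d \<in> {1..n}"
  shows "Fp n p T (int d) (ha n p R S (int d)) \<le> 0 \<longleftrightarrow> j_positive n R d T"
proof -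
  have "2 ^ n \<le> int p ^ n" using p by (intro power_mono) simp_all
  moreover have "(2::int) \<le> 2 ^ n" using n self_le_power[of 2 n] by simp
  ultimately have "2 \<le> int p ^ n" by linarith
  then show ?thesis
    unfolding Fp_ha_same[OF n] j_positive_def delta_of_index[OF d]
    by (simp add: delta_def)
qed

lemma Fp_ha_other_nonpos_iff:
  assumes n: "n \<ge> 1" and p: "p > 0" and d: "d \<in> {1..n}" and k: "k \<in> {1..n}"
    and "k \<noteq> d" and "k \<in> S"
  shows "Fp n p T (int d) (ha n p R S (int k)) \<le> 0 \<longleftrightarrow> (k \<notin> T \<longrightarrow> j_positive n R k T)"
proof -
  define P where "P = int p ^ nat ((int k - int d) mod int n)"
  have "0 < P" unfolding P_def using p by simp
  then show ?thesis
    unfolding Fp_ha_other[OF n d k \<open>k \<noteq> d\<close>] P_def[symmetric] j_positive_def delta_of_index[OF k]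
    using \<open>k \<in> S\<close> by (simp add: delta_def mult_le_0_iff)
qed

lemma Fp_ha_other_eq_0_iff:
  assumes n: "n \<ge> 1" and p: "p > 0" and d: "d \<in> {1..n}" and k: "k \<in> {1..n}"
    and "k \<noteq> d" and "k \<notin> S"
  shows "Fp n p T (int d) (ha n p R S (int k)) = 0 \<longleftrightarrow>
    (if nidx n (int k - 1) \<notin> R then (nidx n (int k - 1) \<in> T) \<noteq> (k \<in> T)
     else (nidx n (int k - 1) \<in> T) = (k \<in> T))"
proof -
  define P where "P = int p ^ nat ((int k - int d) mod int n)"
  have "0 < P" unfolding P_def using p by simp
  then show ?thesis
    unfolding Fp_ha_other[OF n d k \<open>k \<noteq> d\<close>] P_def[symmetric] delta_of_index[OF k]
    using \<open>k \<notin> S\<close> by (auto simp: delta_def)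
qed

lemma RS_admissible_iff_pred:
  assumes n: "n \<ge> 1"
  shows "RS_admissible n R S T \<longleftrightarrow>
    (\<forall>k\<in>{1..n} - S.
       if nidx n (int k - 1) \<notin> R then (nidx n (int k - 1) \<in> T) \<noteq> (k \<in> T)
       else (nidx n (int k - 1) \<in> T) = (k \<in> T))"
proof -
  have succ_pred: "nidx n (int (nidx n (int k - 1)) + 1) = k" if "k \<in> {1..n}" for k
    using nidx_nidx_add[OF n, of "int k - 1" 1] nidx_of_index[OF that] by simp
  have pred_succ: "nidx n (int (nidx n (int i + 1)) - 1) = i" if "i \<in> {1..n}" for i
    using nidx_nidx_add[OF n, of "int i + 1" "-1"] nidx_of_index[OF that] by simp
  show ?thesis
    unfolding RS_admissible_def
  proof (intro iffI ballI)
    fix k assume adm: "\<forall>i\<in>{1..n}. nidx n (int i + 1) \<notin> S \<longrightarrow>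
        (if i \<notin> R then (i \<in> T) \<noteq> (nidx n (int i + 1) \<in> T)
         else (i \<in> T) = (nidx n (int i + 1) \<in> T))"
      and k: "k \<in> {1..n} - S"
    then show "if nidx n (int k - 1) \<notin> R then (nidx n (int k - 1) \<in> T) \<noteq> (k \<in> T)
       else (nidx n (int k - 1) \<in> T) = (k \<in> T)"
      using bspec[OF adm nidx_in_range[OF n, of "int k - 1"]] succ_pred[of k] by auto
  next
    fix i assume adm: "\<forall>k\<in>{1..n} - S.
       if nidx n (int k - 1) \<notin> R then (nidx n (int k - 1) \<in> T) \<noteq> (k \<in> T)
       else (nidx n (int k - 1) \<in> T) = (k \<in> T)"
      and i: "i \<in> {1..n}"
    then show "nidx n (int i + 1) \<notin> S \<longrightarrow>
        (if i \<notin> R then (i \<in> T) \<noteq> (nidx n (int i + 1) \<in> T)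
         else (i \<in> T) = (nidx n (int i + 1) \<in> T))"
      using nidx_in_range[OF n, of "int i + 1"] pred_succ[of i] by force
  qed
qed

lemma ha_sign_conditions_iff_hasse_admissible:
  assumes n: "n \<ge> 1" and p: "p \<ge> 2" and "S \<subseteq> {1..n}" and "d \<in> S"
  shows "(\<forall>k\<in>{1..n}. (k \<in> S \<longrightarrow> Fp n p T (int d) (ha n p R S (int k)) \<le> 0) \<and>
                    (k \<notin> S \<longrightarrow> Fp n p T (int d) (ha n p R S (int k)) = 0))
    \<longleftrightarrow> hasse_admissible n R S T \<and> j_positive n R d T"
    (is "(\<forall>k\<in>{1..n}. ?sign k) \<longleftrightarrow> _")
proof -
  have d: "d \<in> {1..n}" using assms by blast
  have p_pos: "p > 0" using p by simp
  have "(\<forall>k\<in>{1..n}. ?sign k) \<longleftrightarrow>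
      ?sign d \<and> (\<forall>k\<in>S - {d}. ?sign k) \<and> (\<forall>k\<in>{1..n} - S. ?sign k)"
    using assms(3,4) by blast
  also have "?sign d \<longleftrightarrow> j_positive n R d T"
    using Fp_ha_same_nonpos_iff[OF n p d] \<open>d \<in> S\<close> by simp
  also have "(\<forall>k\<in>S - {d}. ?sign k) \<longleftrightarrow> (\<forall>k\<in>S - {d}. k \<notin> T \<longrightarrow> j_positive n R k T)"
    using Fp_ha_other_nonpos_iff[OF n p_pos d] assms(3) by (intro ball_cong) auto
  also have "(\<forall>k\<in>{1..n} - S. ?sign k) \<longleftrightarrow> RS_admissible n R S T"
  proof -
    have "k \<noteq> d" if "k \<notin> S" for k using that \<open>d \<in> S\<close> by blast
    then show ?thesis
      unfolding RS_admissible_iff_pred[OF n] using Fp_ha_other_eq_0_iff[OF n p_pos d]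
      by (intro ball_cong) auto
  qed
  finally show ?thesis
    unfolding hasse_admissible_def by blast
qed

lemma scaled_ha_mem_CpHa:
  assumes n: "n \<ge> 1" and k: "k \<in> {1..n}" and c: "k \<in> S \<longrightarrow> c \<ge> 0"
  shows "(\<lambda>j. c * ha n p R S (int k) j) \<in> CpHa n p R S"
proof -
  define a where "a i = of_bool (i = k) * c" for i
  have "(\<lambda>j. c * ha n p R S (int k) j) = (\<lambda>j. \<Sum>i\<in>{1..n}. a i * ha n p R S (int i) j)"
    using k by (simp add: a_def mult.assoc)
  moreover have "\<forall>i\<in>S. a i \<ge> 0" unfolding a_def using c by auto
  ultimately have "(\<lambda>j. c * ha n p R S (int k) j) \<in> haMonoid n p R S"
    unfolding haMonoid_def by blast
  moreover have "(\<lambda>j. c * ha n p R S (int k) j) \<in> Zn n"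
    using nidx_in_range[OF n] unfolding Zn_def ha_def ebas_def by fastforce
  ultimately show ?thesis
    unfolding CpHa_def saturation_def by (auto intro!: exI[of _ 1])
qed

lemma CpHa_subset_Fp_nonpos_iff:
  assumes n: "n \<ge> 1"
  shows "CpHa n p R S \<subseteq> {x. Fp n p T d x \<le> 0} \<longleftrightarrow>
    (\<forall>k\<in>{1..n}. (k \<in> S \<longrightarrow> Fp n p T d (ha n p R S (int k)) \<le> 0) \<and>
                 (k \<notin> S \<longrightarrow> Fp n p T d (ha n p R S (int k)) = 0))"
proof (intro iffI ballI conjI impI subsetI CollectI)
  fix k assume sub: "CpHa n p R S \<subseteq> {x. Fp n p T d x \<le> 0}" and k: "k \<in> {1..n}"
  have ha_nonpos: "c * Fp n p T d (ha n p R S (int k)) \<le> 0" if "k \<in> S \<longrightarrow> c \<ge> 0" for c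
    using subsetD[OF sub scaled_ha_mem_CpHa[OF n k that]] by (simp add: Fp_scale)
  show "Fp n p T d (ha n p R S (int k)) \<le> 0"
    using ha_nonpos[of 1] by simp
  assume "k \<notin> S"
  then show "Fp n p T d (ha n p R S (int k)) = 0"
    using ha_nonpos[of 1] ha_nonpos[of "-1"] by simp
next
  fix x
  assume signs: "\<forall>k\<in>{1..n}. (k \<in> S \<longrightarrow> Fp n p T d (ha n p R S (int k)) \<le> 0) \<and>
                 (k \<notin> S \<longrightarrow> Fp n p T d (ha n p R S (int k)) = 0)"
    and "x \<in> CpHa n p R S"
  then obtain m a where m: "m \<ge> 1" and a: "\<forall>i\<in>S. a i \<ge> 0"
    and mx: "(\<lambda>j. int m * x j) = (\<lambda>j. \<Sum>i\<in>{1..n}. a i * ha n p R S (int i) j)"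
    unfolding CpHa_def saturation_def haMonoid_def by blast
  have "int m * Fp n p T d x = (\<Sum>i\<in>{1..n}. a i * Fp n p T d (ha n p R S (int i)))"
    unfolding Fp_scale[symmetric] mx Fp_lincomb ..
  also have "\<dots> \<le> 0"
  proof (rule sum_nonpos)
    fix i assume "i \<in> {1..n}"
    then show "a i * Fp n p T d (ha n p R S (int i)) \<le> 0"
      using signs a by (cases "i \<in> S") (auto simp: mult_nonneg_nonpos)
  qed
  finally show "Fp n p T d x \<le> 0"
    using m by (simp add: mult_le_0_iff)
qed

lemma CpHa_subset_pcone_iff:
  "CpHa n p R S \<subseteq> pcone n p S T \<longleftrightarrow> (\<forall>d\<in>S. CpHa n p R S \<subseteq> {x. Fp n p (T d) (int d) x \<le> 0})"
  unfolding pcone_def CpHa_def saturation_def by blast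

theorem mainTheorem9:
  fixes n p :: nat and R S :: "nat set" and T :: "nat \<Rightarrow> nat set"
  assumes "n \<ge> 1" and "prime p"
    and "R \<subseteq> {1..n}" and "S \<subseteq> {1..n}"
    and "\<forall>i\<in>S. T i \<subseteq> {1..n}"
  shows "CpHa n p R S \<subseteq> pcone n p S T \<longleftrightarrow>
         (family_hasse_admissible n R S T \<and> family_positive n R S T)"
proof -
  have p: "p \<ge> 2" using prime_ge_2_nat[OF \<open>prime p\<close>] .
  have "CpHa n p R S \<subseteq> pcone n p S T \<longleftrightarrow>
      (\<forall>d\<in>S. hasse_admissible n R S (T d) \<and> j_positive n R d (T d))"
    unfolding CpHa_subset_pcone_iff CpHa_subset_Fp_nonpos_iff[OF \<open>n \<ge> 1\<close>]
    using ha_sign_conditions_iff_hasse_admissible[OF \<open>n \<ge> 1\<close> p \<open>S \<subseteq> {1..n}\<close>]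
    by simp
  then show ?thesis
    unfolding family_hasse_admissible_def family_positive_def by blast
qed

end
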